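(* Let $\mathcal{M}$ be an episodic MDP with rewards in $[0,1]$ and deterministic expert $\pi^{\operatorname{E}}$. Let $\widehat P$ be a (random) transition model, $\widetilde d=(\widetilde d_h)_{h\le H}$ with $\widetilde d_h:\mathcal{S}\times\mathcal{A}\to\mathbb{R}$ a (random) estimator, and $\bar\pi$ a policy. Suppose: (a) with probability at least $1-\delta_{\operatorname{RFE}}$, for every reward function $w=(w_h)$ with $w_h:\mathcal{S}\times\mathcal{A}\to[-1,1]$ and every policy $\pi$, $|V^{\pi,P,w}-V^{\pi,\widehat P,w}|\le\varepsilon_{\operatorname{RFE}}$; (b) with probability at least $1-\delta_{\operatorname{EST}}$, $\sum_{h=1}^H\|\widetilde d_h-d_h^{\pi^{\operatorname{E}}}\|_1\le\varepsilon_{\operatorname{EST}}$; (c) $\sum_{h=1}^H\|\widetilde d_h-d_h^{\bar\pi,\widehat P}\|_1\le\min_{\pi\in\Pi}\sum_{h=1}^H\|\widetilde d_h-d_h^{\pi,\widehat P}\|_1+\varepsilon_{\mathrm{opt}}$. Then with probability at least $1-\delta_{\operatorname{EST}}-\delta_{\operatorname{RFE}}$, $V^{\pi^{\operatorname{E}}}-V^{\bar\pi}\le2\varepsilon_{\operatorname{EST}}+2\varepsilon_{\operatorname{RFE}}+\varepsilon_{\mathrm{opt}}$.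
   Context: Episodic MDP $(\mathcal{S},\mathcal{A},P,r,H,\rho)$, $\mathcal{S},\mathcal{A}$ finite, $r_h:\mathcal{S}\times\mathcal{A}\to[0,1]$, transitions $P_h(\cdot|s,a)$, initial distribution $\rho$. Policies $\pi=(\pi_h)$, $\pi_h:\mathcal{S}\to\Delta(\mathcal{A})$; $\Pi$ all policies. For a transition model $Q=(Q_h)$, $d_h^{\pi,Q}(s,a)$ is the probability of $(s_h,a_h)=(s,a)$ when running $\pi$ from $s_1\sim\rho$ with $s_{h+1}\sim Q_h(\cdot|s_h,a_h)$; $d_h^\pi=d_h^{\pi,P}$. $V^{\pi,Q,w}=\sum_h\sum_{(s,a)}d_h^{\pi,Q}(s,a)w_h(s,a)$ and $V^\pi=V^{\pi,P,r}$. $\|\cdot\|_1$ is the $\ell_1$ norm over $\mathcal{S}\times\mathcal{A}$. *)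

theory Defs
  imports "HOL-Probability.Probability"
begin

text \<open>Steps are indexed h = 1..H. A transition model is Q :: nat => 's => 'a => 's pmf
  (Q h s a = Q_h(.|s,a)); a (Markov, possibly stochastic) policy is
  pol :: nat => 's => 'a pmf; the initial distribution is rho :: 's pmf.
  The set Pi of all policies is the whole type nat => 's => 'a pmf.\<close>

fun occ :: "'s::finite pmf \<Rightarrow> (nat \<Rightarrow> 's \<Rightarrow> 'a::finite \<Rightarrow> 's pmf)
            \<Rightarrow> (nat \<Rightarrow> 's \<Rightarrow> 'a pmf) \<Rightarrow> nat \<Rightarrow> 's \<Rightarrow> 'a \<Rightarrow> real" where
  "occ rho Q pol 0 s a = 0"
| "occ rho Q pol (Suc 0) s a = pmf rho s * pmf (pol 1 s) a"
| "occ rho Q pol (Suc (Suc h)) s a =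
     (\<Sum>s'\<in>UNIV. \<Sum>a'\<in>UNIV. occ rho Q pol (Suc h) s' a' * pmf (Q (Suc h) s' a') s)
       * pmf (pol (Suc (Suc h)) s) a"

text \<open>occ rho Q pol h s a = d_h^{pol,Q}(s,a): probability that (s_h,a_h) = (s,a).\<close>

definition value_fn :: "'s::finite pmf \<Rightarrow> nat \<Rightarrow> (nat \<Rightarrow> 's \<Rightarrow> 'a::finite \<Rightarrow> 's pmf)
     \<Rightarrow> (nat \<Rightarrow> 's \<Rightarrow> 'a pmf) \<Rightarrow> (nat \<Rightarrow> 's \<Rightarrow> 'a \<Rightarrow> real) \<Rightarrow> real" where
  "value_fn rho H Q pol w = (\<Sum>h=1..H. \<Sum>s\<in>UNIV. \<Sum>a\<in>UNIV. occ rho Q pol h s a * w h s a)"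

definition l1dist :: "('s::finite \<Rightarrow> 'a::finite \<Rightarrow> real) \<Rightarrow> ('s \<Rightarrow> 'a \<Rightarrow> real) \<Rightarrow> real" where
  "l1dist x y = (\<Sum>s\<in>UNIV. \<Sum>a\<in>UNIV. \<bar>x s a - y s a\<bar>)"

definition deterministic_policy :: "(nat \<Rightarrow> 's \<Rightarrow> 'a pmf) \<Rightarrow> bool" where
  "deterministic_policy pol \<longleftrightarrow> (\<exists>f. \<forall>h s. pol h s = return_pmf (f h s))"

end

theory Submission
  imports Defs
begin

(* Write V(piE) - V(pibar) = (V(piE, P) - V(pibar, Phat)) + (V(pibar, Phat) - V(pibar, P)).
   The second term is a model error, at most eps_RFE. As |r| <= 1, the first term is at most
   the l1 distance between the occupancy measures of piE under P and pibar under Phat.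
   Going through the estimate dt, near-optimality of pibar reduces this to eps_opt plus
   twice the estimation error plus the l1 distance between the occupancy measures of piE
   under P and under Phat. That last distance is itself a value difference, for the reward
   sgn (d(piE, P) - d(piE, Phat)), so it is again at most eps_RFE. The union bound gives the
   probability of both good events. *)

definition l1dist_sum :: "nat \<Rightarrow> (nat \<Rightarrow> 's::finite \<Rightarrow> 'a::finite \<Rightarrow> real)
    \<Rightarrow> (nat \<Rightarrow> 's \<Rightarrow> 'a \<Rightarrow> real) \<Rightarrow> real" where
  "l1dist_sum H x y = (\<Sum>h=1..H. l1dist (x h) (y h))"

lemma l1dist_triangle: "l1dist x z \<le> l1dist x y + l1dist y z"
  unfolding l1dist_def by (simp only: sum.distrib[symmetric]) (intro sum_mono, simp)

lemma l1dist_commute: "l1dist x y = l1dist y x"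
  unfolding l1dist_def by (simp add: abs_minus_commute)

lemma l1dist_nonneg: "0 \<le> l1dist x y"
  unfolding l1dist_def by (intro sum_nonneg) auto

lemma l1dist_sum_triangle: "l1dist_sum H x z \<le> l1dist_sum H x y + l1dist_sum H y z"
  unfolding l1dist_sum_def by (simp only: sum.distrib[symmetric]) (intro sum_mono l1dist_triangle)

lemma l1dist_sum_commute: "l1dist_sum H x y = l1dist_sum H y x"
  unfolding l1dist_sum_def by (simp add: l1dist_commute)

lemma l1dist_sum_nonneg: "0 \<le> l1dist_sum H x y"
  unfolding l1dist_sum_def by (intro sum_nonneg l1dist_nonneg)

lemma value_fn_diff:
  "value_fn rho H Q pol w - value_fn rho H Q' pol' w =
   (\<Sum>h=1..H. \<Sum>s\<in>UNIV. \<Sum>a\<in>UNIV. (occ rho Q pol h s a - occ rho Q' pol' h s a) * w h s a)"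
  unfolding value_fn_def by (simp add: sum_subtractf left_diff_distrib)

lemma value_fn_diff_le_l1dist_sum:
  assumes "\<And>h s a. \<bar>w h s a\<bar> \<le> 1"
  shows "value_fn rho H Q pol w - value_fn rho H Q' pol' w
           \<le> l1dist_sum H (occ rho Q pol) (occ rho Q' pol')"
  unfolding value_fn_diff l1dist_sum_def l1dist_def
proof (intro sum_mono)
  fix h s a
  let ?\<Delta> = "occ rho Q pol h s a - occ rho Q' pol' h s a"
  have "?\<Delta> * w h s a \<le> \<bar>?\<Delta>\<bar> * \<bar>w h s a\<bar>"
    by (metis abs_ge_self abs_mult)
  also have "\<dots> \<le> \<bar>?\<Delta>\<bar>"
    using assms[of h s a] by (simp add: mult_left_le)
  finally show "?\<Delta> * w h s a \<le> \<bar>?\<Delta>\<bar>" .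
qed

lemma l1dist_sum_eq_value_fn_diff_sgn:
  "l1dist_sum H (occ rho Q pol) (occ rho Q' pol') =
   value_fn rho H Q pol (\<lambda>h s a. sgn (occ rho Q pol h s a - occ rho Q' pol' h s a))
   - value_fn rho H Q' pol' (\<lambda>h s a. sgn (occ rho Q pol h s a - occ rho Q' pol' h s a))"
  unfolding value_fn_diff l1dist_sum_def l1dist_def by (simp add: abs_sgn)

lemma l1dist_sum_occ_le_if_values_close:
  assumes "\<And>w. (\<And>h s a. \<bar>w h s a\<bar> \<le> 1) \<Longrightarrow>
             \<bar>value_fn rho H Q pol w - value_fn rho H Q' pol w\<bar> \<le> \<epsilon>"
  shows "l1dist_sum H (occ rho Q pol) (occ rho Q' pol) \<le> \<epsilon>"
  unfolding l1dist_sum_eq_value_fn_diff_sgn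
  by (rule order_trans[OF abs_ge_self assms]) (simp add: abs_sgn_eq)

lemma value_gap_le_estimation_model_optimization_errors:
  fixes P Q :: "nat \<Rightarrow> 's::finite \<Rightarrow> 'a::finite \<Rightarrow> 's pmf"
  assumes r_bounded: "\<And>h s a. \<bar>r h s a\<bar> \<le> 1"
    and model: "\<And>w pol. (\<And>h s a. \<bar>w h s a\<bar> \<le> 1) \<Longrightarrow>
             \<bar>value_fn rho H P pol w - value_fn rho H Q pol w\<bar> \<le> eps_RFE"
    and est: "l1dist_sum H d (occ rho P piE) \<le> eps_EST"
    and opt: "l1dist_sum H d (occ rho Q pibar)
                \<le> (INF pol. l1dist_sum H d (occ rho Q pol)) + eps_opt"
  shows "value_fn rho H P piE r - value_fn rho H P pibar r
           \<le> 2 * eps_EST + 2 * eps_RFE + eps_opt"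
proof -
  have "(INF pol. l1dist_sum H d (occ rho Q pol)) \<le> l1dist_sum H d (occ rho Q piE)"
    by (rule cINF_lower) (auto intro: bdd_belowI2 l1dist_sum_nonneg)
  with opt have opt_piE: "l1dist_sum H d (occ rho Q pibar) \<le> l1dist_sum H d (occ rho Q piE) + eps_opt"
    by linarith
  have model_piE: "l1dist_sum H (occ rho P piE) (occ rho Q piE) \<le> eps_RFE"
    using model by (rule l1dist_sum_occ_le_if_values_close)
  have model_pibar: "value_fn rho H Q pibar r - value_fn rho H P pibar r \<le> eps_RFE"
    using model[of r pibar, OF r_bounded] by linarith
  have "value_fn rho H P piE r - value_fn rho H Q pibar r
          \<le> l1dist_sum H (occ rho P piE) (occ rho Q pibar)"
    using r_bounded by (rule value_fn_diff_le_l1dist_sum)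
  also have "\<dots> \<le> l1dist_sum H (occ rho P piE) d + l1dist_sum H d (occ rho Q pibar)"
    by (rule l1dist_sum_triangle)
  also have "\<dots> \<le> eps_EST + l1dist_sum H d (occ rho Q piE) + eps_opt"
    using est opt_piE by (simp add: l1dist_sum_commute)
  also have "\<dots> \<le> eps_EST + (l1dist_sum H d (occ rho P piE) + eps_RFE) + eps_opt"
    using l1dist_sum_triangle[of H d "occ rho Q piE" "occ rho P piE"] model_piE by linarith
  finally show ?thesis
    using est model_pibar by linarith
qed

lemma (in prob_space) prob_Int_ge:
  assumes "A \<in> events" "B \<in> events"
  shows "prob A + prob B - 1 \<le> prob (A \<inter> B)"
  using measure_Un3[of A M B] prob_le_1[of "A \<union> B"] assms
  by (simp add: fmeasurable_eq_sets)

theorem proposition1: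
  fixes M :: "'w measure"
    and rho :: "'s::finite pmf"
    and P :: "nat \<Rightarrow> 's \<Rightarrow> 'a::finite \<Rightarrow> 's pmf"
    and r :: "nat \<Rightarrow> 's \<Rightarrow> 'a \<Rightarrow> real"
    and H :: nat
    and piE :: "nat \<Rightarrow> 's \<Rightarrow> 'a pmf"
    and Phat :: "'w \<Rightarrow> nat \<Rightarrow> 's \<Rightarrow> 'a \<Rightarrow> 's pmf"
    and dt :: "'w \<Rightarrow> nat \<Rightarrow> 's \<Rightarrow> 'a \<Rightarrow> real"
    and pibar :: "'w \<Rightarrow> nat \<Rightarrow> 's \<Rightarrow> 'a pmf"
    and eps_RFE eps_EST eps_opt delta_RFE delta_EST :: real
    and E_RFE E_EST :: "'w set"
  assumes "prob_space M"
    and r_range: "\<And>h s a. 0 \<le> r h s a \<and> r h s a \<le> 1"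
    and expert_det: "deterministic_policy piE"
    and E_RFE_meas: "E_RFE \<in> sets M"
    and E_RFE_prob: "measure M E_RFE \<ge> 1 - delta_RFE"
    and RFE: "\<And>\<omega>. \<omega> \<in> E_RFE \<Longrightarrow>
        \<forall>w. (\<forall>h s a. \<bar>w h s a\<bar> \<le> 1) \<longrightarrow>
          (\<forall>pol. \<bar>value_fn rho H P pol w - value_fn rho H (Phat \<omega>) pol w\<bar> \<le> eps_RFE)"
    and E_EST_meas: "E_EST \<in> sets M"
    and E_EST_prob: "measure M E_EST \<ge> 1 - delta_EST"
    and EST: "\<And>\<omega>. \<omega> \<in> E_EST \<Longrightarrow>
        (\<Sum>h=1..H. l1dist (dt \<omega> h) (occ rho P piE h)) \<le> eps_EST"
    and OPT: "\<And>\<omega>. \<omega> \<in> space M \<Longrightarrow>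
        (\<Sum>h=1..H. l1dist (dt \<omega> h) (occ rho (Phat \<omega>) (pibar \<omega>) h))
          \<le> (INF pol. (\<Sum>h=1..H. l1dist (dt \<omega> h) (occ rho (Phat \<omega>) pol h))) + eps_opt"
  shows "\<exists>B\<in>sets M. measure M B \<ge> 1 - delta_EST - delta_RFE \<and>
           (\<forall>\<omega>\<in>B. value_fn rho H P piE r - value_fn rho H P (pibar \<omega>) r
                    \<le> 2 * eps_EST + 2 * eps_RFE + eps_opt)"
proof (intro bexI conjI ballI)
  interpret prob_space M by fact
  show "E_RFE \<inter> E_EST \<in> sets M"
    using E_RFE_meas E_EST_meas by auto
  show "measure M (E_RFE \<inter> E_EST) \<ge> 1 - delta_EST - delta_RFE"
    using prob_Int_ge[OF E_RFE_meas E_EST_meas] E_RFE_prob E_EST_prob by linarith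
next
  fix \<omega> assume \<omega>: "\<omega> \<in> E_RFE \<inter> E_EST"
  then have "\<omega> \<in> space M"
    using E_RFE_meas sets.sets_into_space by auto
  then show "value_fn rho H P piE r - value_fn rho H P (pibar \<omega>) r
               \<le> 2 * eps_EST + 2 * eps_RFE + eps_opt"
    using \<omega> RFE EST OPT r_range
    by (intro value_gap_le_estimation_model_optimization_errors[where d = "dt \<omega>" and Q = "Phat \<omega>"])
       (auto simp: l1dist_sum_def abs_le_iff)
qed

end
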